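(* Consider running GD-$k$ with rate $r=\frac{1}{\gamma k^2}$ on an instance $\sigma$ of $k$-MPMD on an $H$-metric space with parameter $\gamma$, and let $\mathcal M=\{M_1,\ldots,M_p\}$ be the output perfect $k$-way matching, where $M_\ell=\{v_{\ell,1},\ldots,v_{\ell,k}\}$ is matched at time $\tau_\ell$. Let $T$ be the time at which all requests are matched. Then the total waiting cost satisfies $$\sum_{\ell=1}^p\sum_{i=1}^k(\tau_\ell-\mathrm{atime}(v_{\ell,i}))=\frac1r\sum_{S\subseteq V}\mathrm{sur}(S)\,y_S(T)\le\frac1r\,\mathcal D'(\sigma),$$ where $\mathcal D'(\sigma)$ is the optimal value of $(\mathcal D')$.
   Context: $k\ge2$. An $H$-metric with parameter $\gamma$ (integer, $1\le\gamma\le k-1$) is a map $d_H:\chi^k\to[0,\infty)$ that is invariant under permutation of its arguments, is zero iff all arguments are equal, satisfies $d_H(p_1,\ldots,p_k)\le d_H(p_1,\ldots,p_i,a,\ldots,a)+d_H(a,\ldots,a,p_{i+1},\ldots,p_k)$ for all $p_j,a\in\chi$ and $i\in\{1,\dots,k\}$ (with $k-i$, resp. $i$, copies of $a$), and satisfies: $d_H(p)\le d_H(p')$ whenever the set of distinct entries of $p$ is a proper subset of that of $p'$, and $d_H(p)\le\gamma d_H(p')$ whenever these sets are equal. An instance is $\sigma=(V,\mathrm{atime},\mathrm{pos})$ with $V=\{u_1,\ldots,u_m\}$ ($m$ a multiple of $k$), nondecreasing arrival times $\mathrm{atime}:V\to\mathbb R_{\ge0}$ and positions $\mathrm{pos}:V\to\chi$.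 The metric $d$ on $\chi$ is $d(p,q):=d_H(p,q,\ldots,q)+d_H(q,p,\ldots,p)$ (first argument once, second $k-1$ times); $E$ is the set of unordered pairs of distinct requests, $\mathrm{opt\text{-}cost}(\{u,w\}):=d(\mathrm{pos}(u),\mathrm{pos}(w))+|\mathrm{atime}(u)-\mathrm{atime}(w)|$; for $S\subseteq V$, $\mathrm{sur}(S):=|S|\bmod k$ and $\delta(S)$ is the set of pairs with exactly one element in $S$. The LP $(\mathcal D')$ is: maximize $\sum_{S\subseteq V}\mathrm{sur}(S)(k-\mathrm{sur}(S))y_S$ subject to $\sum_{S:e\in\delta(S)}y_S\le\frac{1}{\gamma k^2}\mathrm{opt\text{-}cost}(e)$ for all $e\in E$ and $y_S\ge0$ for all $S\subseteq V$. Algorithm GD-$k$ (Greedy Dual for $k$-MPMD) runs in continuous time from $0$. It maintains: a partition of the already-arrived requests into "active sets" ($A(v)$ denotes the active set containing $v$); a family $\mathcal M$ of disjoint $k$-element sets of requests (the groups matched so far); a request is free if it lies in no set of $\mathcal M$, and $\mathrm{free}(S)$ is the set of free requests of $S$; and dual values $y_S(\tau)\ge0$ for $S\subseteq V$, all initially $0$. When a request $v$ arrives, $A(v):=\{v\}$ is created. At every moment, for each active set $S$ with $\mathrm{free}(S)\ne\emptyset$, $y_S$ increases continuously at rate $r$; all other $y_S$ stay constant. Whenever a pair $e=\{u,w\}$ of arrived requests with $A(u)\ne A(w)$ becomes tight, i.e. $\sum_{S:e\in\delta(S)}y_S=\frac{1}{\gamma k^2}\mathrm{opt\text{-}cost}(e)$,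 the algorithm replaces $A(u)$ and $A(w)$ by the single active set $S=A(u)\cup A(w)$, marks $e$, and, while $|\mathrm{free}(S)|\ge k$, chooses arbitrarily $k$ free requests of $S$ and adds them as a group to $\mathcal M$ (they are matched at the current time). *)

theory Defs
  imports Complex_Main "HOL-Library.Multiset"
begin

text \<open>An H-metric of arity k with parameter gamma on points of type 'p.
  Arguments are represented as lists of length k; values on other lists are irrelevant.\<close>

definition is_Hmetric :: "nat \<Rightarrow> nat \<Rightarrow> ('p list \<Rightarrow> real) \<Rightarrow> bool" where
  "is_Hmetric k \<gamma> dH \<longleftrightarrow>
     (\<forall>p. length p = k \<longrightarrow> dH p \<ge> 0) \<and>
     (\<forall>p q. length p = k \<longrightarrow> mset q = mset p \<longrightarrow> dH q = dH p) \<and>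
     (\<forall>p. length p = k \<longrightarrow> (dH p = 0 \<longleftrightarrow> (\<forall>i<k. \<forall>j<k. p ! i = p ! j))) \<and>
     (\<forall>p a i. length p = k \<longrightarrow> 1 \<le> i \<longrightarrow> i \<le> k \<longrightarrow>
        dH p \<le> dH (take i p @ replicate (k - i) a) + dH (replicate i a @ drop i p)) \<and>
     (\<forall>p p'. length p = k \<longrightarrow> length p' = k \<longrightarrow> set p \<subset> set p' \<longrightarrow> dH p \<le> dH p') \<and>
     (\<forall>p p'. length p = k \<longrightarrow> length p' = k \<longrightarrow> set p = set p' \<longrightarrow> dH p \<le> real \<gamma> * dH p')"

definition Hdist :: "nat \<Rightarrow> ('p list \<Rightarrow> real) \<Rightarrow> 'p \<Rightarrow> 'p \<Rightarrow> real" where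
  "Hdist k dH p q = dH (p # replicate (k - 1) q) + dH (q # replicate (k - 1) p)"

definition opt_cost :: "nat \<Rightarrow> ('p list \<Rightarrow> real) \<Rightarrow> ('v \<Rightarrow> real) \<Rightarrow> ('v \<Rightarrow> 'p) \<Rightarrow> 'v \<Rightarrow> 'v \<Rightarrow> real" where
  "opt_cost k dH atime pos u w = Hdist k dH (pos u) (pos w) + \<bar>atime u - atime w\<bar>"

definition sur :: "nat \<Rightarrow> 'v set \<Rightarrow> nat" where
  "sur k S = card S mod k"

text \<open>The pair {u,w} lies in delta(S) iff exactly one of u, w is in S.\<close>
definition crosses :: "'v set \<Rightarrow> 'v \<Rightarrow> 'v \<Rightarrow> bool" where
  "crosses S u w \<longleftrightarrow> (u \<in> S) \<noteq> (w \<in> S)"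

definition load :: "'v set \<Rightarrow> ('v set \<Rightarrow> real) \<Rightarrow> 'v \<Rightarrow> 'v \<Rightarrow> real" where
  "load V y u w = (\<Sum>S\<in>{S. S \<subseteq> V \<and> crosses S u w}. y S)"

definition D'_feasible :: "'v set \<Rightarrow> ('v \<Rightarrow> 'v \<Rightarrow> real) \<Rightarrow> ('v set \<Rightarrow> real) \<Rightarrow> bool" where
  "D'_feasible V bound y \<longleftrightarrow>
     (\<forall>S. S \<subseteq> V \<longrightarrow> y S \<ge> 0) \<and>
     (\<forall>u\<in>V. \<forall>w\<in>V. u \<noteq> w \<longrightarrow> load V y u w \<le> bound u w)"

definition D'_obj :: "nat \<Rightarrow> 'v set \<Rightarrow> ('v set \<Rightarrow> real) \<Rightarrow> real" where
  "D'_obj k V y = (\<Sum>S\<in>Pow V. real (sur k S * (k - sur k S)) * y S)"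

definition D'_opt :: "nat \<Rightarrow> nat \<Rightarrow> ('p list \<Rightarrow> real) \<Rightarrow> 'v set \<Rightarrow> ('v \<Rightarrow> real) \<Rightarrow> ('v \<Rightarrow> 'p) \<Rightarrow> real" where
  "D'_opt k \<gamma> dH V atime pos =
     Sup {D'_obj k V y | y. D'_feasible V (\<lambda>u w. opt_cost k dH atime pos u w / (real \<gamma> * real k ^ 2)) y}"

text \<open>State: current time, the family of active sets (a partition of the arrived requests),
  the matched groups together with their matching times, and the dual values y.\<close>
record 'v gd_state =
  clock :: real
  act :: "'v set set"
  grp :: "('v set \<times> real) set"
  yv :: "'v set \<Rightarrow> real"

definition gd_init :: "'v gd_state" where
  "gd_init = \<lparr>clock = 0, act = {}, grp = {}, yv = (\<lambda>_. 0)\<rparr>"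

definition free :: "('v set \<times> real) set \<Rightarrow> 'v set \<Rightarrow> 'v set" where
  "free G S = S - \<Union>(fst ` G)"

definition same_active :: "'v set set \<Rightarrow> 'v \<Rightarrow> 'v \<Rightarrow> bool" where
  "same_active A u w \<longleftrightarrow> (\<exists>S\<in>A. u \<in> S \<and> w \<in> S)"

definition grow :: "real \<Rightarrow> 'v gd_state \<Rightarrow> real \<Rightarrow> 'v set \<Rightarrow> real" where
  "grow r s t S = yv s S + (if S \<in> act s \<and> free (grp s) S \<noteq> {} then r * (t - clock s) else 0)"

text \<open>Parameters: k, rate r, request set V, arrival times, and the
  tightness bound for each pair (opt-cost/(gamma k^2)).
  - arrive: a request arriving at the current time gets its singleton active set;
  - merge: a tight pair across two active sets merges them, and then groups of k free
    requests of the merged set are matched at the current time until fewer than k remain free;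
  - advance: time runs (duals grow continuously) from clock s to t, provided no request arrives
    strictly before t, no cross pair is tight at clock s, and no constraint is exceeded at t
    (so no pair becomes tight strictly inside the interval).\<close>
inductive gd_step :: "nat \<Rightarrow> real \<Rightarrow> 'v set \<Rightarrow> ('v \<Rightarrow> real) \<Rightarrow> ('v \<Rightarrow> 'v \<Rightarrow> real)
    \<Rightarrow> 'v gd_state \<Rightarrow> 'v gd_state \<Rightarrow> bool"
  for k r V atime bound where
  arrive: "\<lbrakk> v \<in> V; v \<notin> \<Union>(act s); atime v = clock s \<rbrakk>
     \<Longrightarrow> gd_step k r V atime bound s (s\<lparr>act := insert {v} (act s)\<rparr>)"
| merge: "\<lbrakk> S1 \<in> act s; S2 \<in> act s; S1 \<noteq> S2; u \<in> S1; w \<in> S2;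
     load V (yv s) u w = bound u w;
     \<forall>g\<in>NG. g \<subseteq> free (grp s) (S1 \<union> S2) \<and> card g = k;
     pairwise disjnt NG;
     card (free (grp s) (S1 \<union> S2) - \<Union>NG) < k \<rbrakk>
     \<Longrightarrow> gd_step k r V atime bound s
           (s\<lparr>act := insert (S1 \<union> S2) (act s - {S1, S2}),
              grp := grp s \<union> (\<lambda>g. (g, clock s)) ` NG\<rparr>)"
| advance: "\<lbrakk> clock s < t;
     \<forall>w\<in>V - \<Union>(act s). t \<le> atime w;
     \<forall>u\<in>\<Union>(act s). \<forall>w\<in>\<Union>(act s). \<not> same_active (act s) u w \<longrightarrow> load V (yv s) u w < bound u w;
     \<forall>u\<in>\<Union>(act s). \<forall>w\<in>\<Union>(act s). \<not> same_active (act s) u w \<longrightarrow> load V (grow r s t) u w \<le> bound u w \<rbrakk>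
     \<Longrightarrow> gd_step k r V atime bound s (s\<lparr>clock := t, yv := grow r s t\<rparr>)"

definition waiting_cost :: "('v \<Rightarrow> real) \<Rightarrow> ('v set \<times> real) set \<Rightarrow> real" where
  "waiting_cost atime G = (\<Sum>(M, \<tau>)\<in>G. \<Sum>v\<in>M. (\<tau> - atime v))"

end

theory Submission
  imports Defs
begin

(*
  Each active set S keeps exactly sur(S) = |S| mod k free requests, because merging adds
  these counts and matching removes whole groups of k.  While time runs, every active set with
  a free request raises its dual at rate r, so the sum of sur(S) y_S grows at r times the
  number of free requests: exactly r times the rate at which their waiting cost grows.
  Matching a request freezes its waiting cost, so once all requests are matched the waiting
  cost equals (1/r) times the sum of sur(S) y_S.

  The duals are feasible for (D'): pairs inside one active set are crossed by no growing set,
  pairs across active sets are never overloaded by the algorithm, and the load a newly arrived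
  request sees on a pair {v, w} is at most the total dual r (atime v - atime w) that has grown
  around w, which opt-cost/(gamma k^2) dominates.  Finally sur(S) <= sur(S) (k - sur(S)).
*)

lemma load_sym: "load V y u w = load V y w u"
  unfolding load_def crosses_def by metis

lemma finite_crossing_sets: "finite V \<Longrightarrow> finite {S. S \<subseteq> V \<and> crosses S u w}"
  by (rule finite_subset[of _ "Pow V"]) auto

definition vertex_load :: "'v set \<Rightarrow> ('v set \<Rightarrow> real) \<Rightarrow> 'v \<Rightarrow> real" where
  "vertex_load V y w = (\<Sum>S\<in>{S\<in>Pow V. w \<in> S}. y S)"

lemma load_le_vertex_load:
  assumes "finite V" "\<forall>S. 0 \<le> y S" "\<forall>S. y S \<noteq> 0 \<longrightarrow> v \<notin> S"
  shows "load V y v w \<le> vertex_load V y w"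
proof -
  have fin: "finite {S. S \<subseteq> V \<and> crosses S v w}" using finite_crossing_sets[OF assms(1)] .
  have "load V y v w = (\<Sum>S\<in>{S. S \<subseteq> V \<and> crosses S v w}. if w \<in> S then y S else 0)"
    unfolding load_def by (rule sum.cong) (use assms(3) in \<open>auto simp: crosses_def\<close>)
  also have "\<dots> = (\<Sum>S\<in>{S\<in>{S. S \<subseteq> V \<and> crosses S v w}. w \<in> S}. y S)"
    using sum.inter_filter[OF fin, of y "\<lambda>S. w \<in> S"] by simp
  also have "\<dots> \<le> vertex_load V y w"
    unfolding vertex_load_def by (rule sum_mono2) (use assms in auto)
  finally show ?thesis .
qed

lemma card_Diff_Union_eq_mod:
  assumes F: "finite F" and NG: "\<forall>g\<in>NG. g \<subseteq> F \<and> card g = k" "pairwise disjnt NG"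
    and rest: "card (F - \<Union>NG) < k"
  shows "card (F - \<Union>NG) = card F mod k"
proof -
  have sub: "\<Union>NG \<subseteq> F" using NG(1) by blast
  have fin: "finite NG" "\<forall>g\<in>NG. finite g"
    using NG(1) F by (auto intro: finite_subset[of _ "Pow F"] finite_subset)
  have "card (\<Union>NG) = k * card NG"
    using card_Union_disjoint[OF NG(2)] fin NG(1) by simp
  then have "card F = card (F - \<Union>NG) + k * card NG"
    using card_Diff_subset[OF _ sub] card_mono[OF F sub] fin by (simp add: finite_Union)
  then show ?thesis using rest by simp
qed

lemma waiting_cost_add_groups:
  assumes G: "finite G" and NG: "finite NG" "\<forall>g\<in>NG. finite g" "pairwise disjnt NG"
    and new: "\<forall>g\<in>NG. (g, \<tau>) \<notin> G"
  shows "waiting_cost atime (G \<union> (\<lambda>g. (g, \<tau>)) ` NG)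
           = waiting_cost atime G + (\<Sum>v\<in>\<Union>NG. \<tau> - atime v)"
proof -
  have "waiting_cost atime (G \<union> (\<lambda>g. (g, \<tau>)) ` NG)
          = waiting_cost atime G + waiting_cost atime ((\<lambda>g. (g, \<tau>)) ` NG)"
    unfolding waiting_cost_def by (rule sum.union_disjoint) (use G NG new in auto)
  also have "waiting_cost atime ((\<lambda>g. (g, \<tau>)) ` NG) = (\<Sum>g\<in>NG. \<Sum>v\<in>g. \<tau> - atime v)"
    unfolding waiting_cost_def by (subst sum.reindex) (auto simp: inj_on_def)
  also have "\<dots> = (\<Sum>v\<in>\<Union>NG. \<tau> - atime v)"
    using sum.Union_disjoint[of NG "\<lambda>v. \<tau> - atime v"] NG by (simp add: pairwise_def disjnt_def)
  finally show ?thesis .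
qed

lemma free_Un_groups: "free (G \<union> (\<lambda>g. (g, \<tau>)) ` NG) X = free G X - \<Union>NG"
  unfolding free_def by (auto simp: image_image)

lemma sum_sur_le_D'_obj:
  assumes k: "k > 0" and y: "\<forall>S\<subseteq>V. 0 \<le> y S"
  shows "(\<Sum>S\<in>Pow V. real (sur k S) * y S) \<le> D'_obj k V y"
  unfolding D'_obj_def
proof (rule sum_mono)
  fix S assume S: "S \<in> Pow V"
  have "sur k S < k" unfolding sur_def using k by simp
  then have "sur k S * 1 \<le> sur k S * (k - sur k S)" by (intro mult_le_mono2) simp
  then have "real (sur k S) \<le> real (sur k S * (k - sur k S))" by (metis of_nat_le_iff mult_1_right)
  then show "real (sur k S) * y S \<le> real (sur k S * (k - sur k S)) * y S"
    by (rule mult_right_mono) (use y S in auto)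
qed

lemma opt_cost_ge_arrival_gap:
  assumes H: "is_Hmetric k \<gamma> dH" and k: "k \<ge> 1"
  shows "\<bar>atime u - atime w\<bar> \<le> opt_cost k dH atime pos u w"
proof -
  have "\<forall>p. length p = k \<longrightarrow> 0 \<le> dH p" using H unfolding is_Hmetric_def by blast
  then have "0 \<le> Hdist k dH (pos u) (pos w)"
    using k unfolding Hdist_def by simp
  then show ?thesis unfolding opt_cost_def by simp
qed

lemma D'_feasible_le_bound:
  assumes fV: "finite V" and F: "D'_feasible V bound y"
    and S: "S \<subseteq> V" "u \<in> S" "w \<in> V - S"
  shows "y S \<le> bound u w"
proof -
  have "y S \<le> load V y u w"
    unfolding load_def
    by (rule member_le_sum) (use S F finite_crossing_sets[OF fV] in \<open>auto simp: D'_feasible_def crosses_def\<close>)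
  also have "\<dots> \<le> bound u w" using F S unfolding D'_feasible_def by auto
  finally show ?thesis .
qed

lemma bdd_above_D'_obj:
  assumes fV: "finite V" and k: "k > 0" and kd: "k dvd card V"
  shows "bdd_above {D'_obj k V y | y. D'_feasible V bound y}"
proof -
  define C where "C = (\<Sum>u\<in>V. \<Sum>w\<in>V. \<bar>bound u w\<bar>)"
  have C: "bound u w \<le> C" if "u \<in> V" "w \<in> V" for u w
  proof -
    have "bound u w \<le> (\<Sum>w\<in>V. \<bar>bound u w\<bar>)"
      using member_le_sum[of w V "\<lambda>w. \<bar>bound u w\<bar>"] that fV by simp
    also have "\<dots> \<le> C"
      unfolding C_def by (rule member_le_sum) (use that fV in \<open>auto intro: sum_nonneg\<close>)
    finally show ?thesis .
  qed
  have C0: "0 \<le> C" unfolding C_def by (intro sum_nonneg) auto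
  have summand_bound: "real (sur k S * (k - sur k S)) * y S \<le> real (k * k) * C"
    if F: "D'_feasible V bound y" and S: "S \<subseteq> V" for y S
  proof (cases "sur k S = 0")
    case True
    then show ?thesis using C0 by simp
  next
    case False
    have "S \<noteq> {}" using False unfolding sur_def by auto
    moreover have "S \<noteq> V" using False kd unfolding sur_def by auto
    ultimately obtain u w where uw: "u \<in> S" "w \<in> V - S" using S by blast
    have "y S \<le> bound u w" by (rule D'_feasible_le_bound[OF fV F S uw])
    also have "\<dots> \<le> C" using C S uw by blast
    finally have "y S \<le> C" .
    moreover have "sur k S * (k - sur k S) \<le> k * k"
      using k unfolding sur_def by (intro mult_le_mono) (simp_all add: less_imp_le)
    then have "real (sur k S * (k - sur k S)) \<le> real (k * k)" by (rule of_nat_mono)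
    moreover have "0 \<le> y S" using F S unfolding D'_feasible_def by auto
    ultimately show ?thesis by (intro mult_mono) auto
  qed
  show ?thesis
  proof (rule bdd_aboveI)
    fix x assume "x \<in> {D'_obj k V y | y. D'_feasible V bound y}"
    then obtain y where x: "x = D'_obj k V y" and F: "D'_feasible V bound y" by blast
    have "D'_obj k V y \<le> (\<Sum>S\<in>Pow V. real (k * k) * C)"
      unfolding D'_obj_def by (rule sum_mono) (use summand_bound F in blast)
    then show "x \<le> (\<Sum>S\<in>Pow V. real (k * k) * C)" unfolding x .
  qed
qed

definition gd_partition_inv :: "nat \<Rightarrow> 'v set \<Rightarrow> 'v gd_state \<Rightarrow> bool" where
  "gd_partition_inv k V s \<longleftrightarrow>
     (\<forall>S\<in>act s. S \<subseteq> V) \<and> pairwise disjnt (act s) \<and>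
     \<Union>(fst ` grp s) \<subseteq> \<Union>(act s) \<and> finite (grp s) \<and>
     (\<forall>S\<in>act s. card (free (grp s) S) = sur k S)"

lemma gd_partition_inv_arrive:
  assumes k: "k \<ge> 2" and I: "gd_partition_inv k V s"
    and v: "v \<in> V" "v \<notin> \<Union>(act s)"
  shows "gd_partition_inv k V (s\<lparr>act := insert {v} (act s)\<rparr>)"
proof -
  have "free (grp s) {v} = {v}"
    using I v(2) unfolding gd_partition_inv_def free_def by blast
  then have "card (free (grp s) {v}) = sur k {v}"
    using k by (simp add: sur_def)
  moreover have "pairwise disjnt (insert {v} (act s))"
    using I v(2) unfolding gd_partition_inv_def by (auto simp: pairwise_insert disjnt_def)
  ultimately show ?thesis
    using I v(1) unfolding gd_partition_inv_def by simp blast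
qed

lemma gd_partition_inv_merge:
  assumes fV: "finite V" and I: "gd_partition_inv k V s"
    and S12: "S1 \<in> act s" "S2 \<in> act s" "S1 \<noteq> S2"
    and NG: "\<forall>g\<in>NG. g \<subseteq> free (grp s) (S1 \<union> S2) \<and> card g = k" "pairwise disjnt NG"
      "card (free (grp s) (S1 \<union> S2) - \<Union>NG) < k"
  shows "gd_partition_inv k V (s\<lparr>act := insert (S1 \<union> S2) (act s - {S1, S2}),
              grp := grp s \<union> (\<lambda>g. (g, clock s)) ` NG\<rparr>)"
    (is "gd_partition_inv k V ?s'")
proof -
  let ?F = "free (grp s)"
  have sub: "\<forall>S\<in>act s. S \<subseteq> V" and dis: "pairwise disjnt (act s)"
    and matched: "\<Union>(fst ` grp s) \<subseteq> \<Union>(act s)" and finG: "finite (grp s)"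
    and card_free: "\<forall>S\<in>act s. card (?F S) = sur k S"
    using I unfolding gd_partition_inv_def by auto
  have fin12: "finite S1" "finite S2" using sub S12(1,2) finite_subset[OF _ fV] by blast+
  have dis12: "disjnt S1 S2" using dis S12 by (auto simp: pairwise_def)
  have NG_sub: "\<Union>NG \<subseteq> ?F (S1 \<union> S2)" using NG(1) by blast
  have finF: "finite (?F (S1 \<union> S2))" using fin12 unfolding free_def by auto
  have finNG: "finite NG" "\<forall>g\<in>NG. finite g"
    using NG(1) finF by (auto intro: finite_subset[of _ "Pow (?F (S1 \<union> S2))"] finite_subset)
  have "card (free (grp ?s') (S1 \<union> S2)) = card (?F (S1 \<union> S2)) mod k"
    using card_Diff_Union_eq_mod[OF finF NG] by (simp add: free_Un_groups)
  also have "card (?F (S1 \<union> S2)) = card (?F S1) + card (?F S2)"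
    using card_Un_disjoint[of "?F S1" "?F S2"] fin12 dis12
    unfolding free_def disjnt_def by (auto simp: Un_Diff)
  also have "(\<dots>) mod k = sur k (S1 \<union> S2)"
    using card_free S12 card_Un_disjoint[OF fin12] dis12
    by (simp add: sur_def disjnt_def mod_add_eq)
  finally have merged: "card (free (grp ?s') (S1 \<union> S2)) = sur k (S1 \<union> S2)" .
  have others: "card (free (grp ?s') S) = sur k S" if "S \<in> act s - {S1, S2}" for S
  proof -
    have "disjnt S S1" "disjnt S S2" using dis S12 that by (auto simp: pairwise_def)
    then have "free (grp ?s') S = ?F S"
      using NG_sub unfolding free_Un_groups free_def disjnt_def by auto
    then show ?thesis using card_free that by simp
  qed
  have "pairwise disjnt (act ?s')"
    using dis S12 by (auto simp: pairwise_insert pairwise_def disjnt_def)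
  moreover have "\<Union>(fst ` grp ?s') \<subseteq> \<Union>(act ?s')"
    using matched NG_sub S12 unfolding free_def by (auto simp: image_image)
  ultimately show ?thesis
    using sub S12 finG finNG merged others unfolding gd_partition_inv_def by auto
qed

lemma gd_step_partition_inv:
  assumes "finite V" "k \<ge> 2" "gd_step k r V atime bound s s'" "gd_partition_inv k V s"
  shows "gd_partition_inv k V s'"
  using assms(3)
proof cases
  case (arrive v)
  then show ?thesis using gd_partition_inv_arrive[OF assms(2,4)] by simp
next
  case (merge S1 S2 u w NG)
  then show ?thesis
    unfolding merge(1) by (intro gd_partition_inv_merge[OF assms(1,4)]) auto
next
  case (advance t)
  then show ?thesis using assms(4) unfolding gd_partition_inv_def by simp
qed

definition gd_dual_inv :: "real \<Rightarrow> 'v set \<Rightarrow> ('v \<Rightarrow> real) \<Rightarrow> ('v \<Rightarrow> 'v \<Rightarrow> real) \<Rightarrow> 'v gd_state \<Rightarrow> bool" where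
  "gd_dual_inv r V atime bound s \<longleftrightarrow>
     (\<forall>S. 0 \<le> yv s S) \<and> (\<forall>S. yv s S \<noteq> 0 \<longrightarrow> S \<subseteq> \<Union>(act s)) \<and>
     (\<forall>w\<in>\<Union>(act s). vertex_load V (yv s) w \<le> r * (clock s - atime w)) \<and>
     (\<forall>u\<in>\<Union>(act s). \<forall>w\<in>\<Union>(act s). u \<noteq> w \<longrightarrow> load V (yv s) u w \<le> bound u w)"

lemma gd_dual_inv_arrive:
  assumes fV: "finite V" and r: "0 \<le> r"
    and B: "\<forall>u\<in>V. \<forall>w\<in>V. r * \<bar>atime u - atime w\<bar> \<le> bound u w"
    and P: "gd_partition_inv k V s" and D: "gd_dual_inv r V atime bound s"
    and v: "v \<in> V" "v \<notin> \<Union>(act s)" "atime v = clock s"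
  shows "gd_dual_inv r V atime bound (s\<lparr>act := insert {v} (act s)\<rparr>)"
proof -
  have y0: "\<forall>S. 0 \<le> yv s S" and supp: "\<forall>S. yv s S \<noteq> 0 \<longrightarrow> S \<subseteq> \<Union>(act s)"
    and vl: "\<forall>w\<in>\<Union>(act s). vertex_load V (yv s) w \<le> r * (clock s - atime w)"
    and pairs: "\<forall>u\<in>\<Union>(act s). \<forall>w\<in>\<Union>(act s). u \<noteq> w \<longrightarrow> load V (yv s) u w \<le> bound u w"
    using D unfolding gd_dual_inv_def by auto
  have UV: "\<Union>(act s) \<subseteq> V" using P unfolding gd_partition_inv_def by auto
  have v_unsupported: "\<forall>S. yv s S \<noteq> 0 \<longrightarrow> v \<notin> S" using supp v(2) by blast
  have "vertex_load V (yv s) v = 0"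
    unfolding vertex_load_def by (rule sum.neutral) (use v_unsupported in blast)
  then have vl_v: "vertex_load V (yv s) v \<le> r * (clock s - atime v)" using v(3) by simp
  have new_pairs: "load V (yv s) v w \<le> bound v w \<and> load V (yv s) w v \<le> bound w v"
    if w: "w \<in> \<Union>(act s)" for w
  proof -
    have "load V (yv s) v w \<le> vertex_load V (yv s) w"
      by (rule load_le_vertex_load[OF fV y0 v_unsupported])
    also have "\<dots> \<le> r * (clock s - atime w)" using vl w by blast
    also have "\<dots> \<le> r * \<bar>atime v - atime w\<bar>" using r v(3) by (intro mult_left_mono) auto
    finally have "load V (yv s) v w \<le> r * \<bar>atime v - atime w\<bar>" .
    moreover have "r * \<bar>atime v - atime w\<bar> \<le> bound v w" "r * \<bar>atime w - atime v\<bar> \<le> bound w v"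
      using B v(1) w UV by auto
    moreover have "\<bar>atime w - atime v\<bar> = \<bar>atime v - atime w\<bar>" by (rule abs_minus_commute)
    ultimately show ?thesis using load_sym[of V "yv s" v w] by simp
  qed
  have "\<forall>u\<in>insert v (\<Union>(act s)). \<forall>w\<in>insert v (\<Union>(act s)). u \<noteq> w \<longrightarrow> load V (yv s) u w \<le> bound u w"
    using pairs new_pairs by blast
  moreover have "\<forall>w\<in>insert v (\<Union>(act s)). vertex_load V (yv s) w \<le> r * (clock s - atime w)"
    using vl vl_v by blast
  moreover have "\<forall>S. yv s S \<noteq> 0 \<longrightarrow> S \<subseteq> insert v (\<Union>(act s))" using supp by blast
  ultimately show ?thesis using y0 unfolding gd_dual_inv_def by simp
qed

lemma gd_dual_inv_advance:
  assumes fV: "finite V" and r: "0 \<le> r" and t: "clock s < t"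
    and P: "gd_partition_inv k V s" and D: "gd_dual_inv r V atime bound s"
    and cross: "\<forall>u\<in>\<Union>(act s). \<forall>w\<in>\<Union>(act s). \<not> same_active (act s) u w \<longrightarrow>
                  load V (grow r s t) u w \<le> bound u w"
  shows "gd_dual_inv r V atime bound (s\<lparr>clock := t, yv := grow r s t\<rparr>)"
proof -
  define \<delta> where "\<delta> = r * (t - clock s)"
  define growing where "growing S \<longleftrightarrow> S \<in> act s \<and> free (grp s) S \<noteq> {}" for S
  have grow: "grow r s t S = yv s S + (if growing S then \<delta> else 0)" for S
    unfolding grow_def growing_def \<delta>_def by simp
  have \<delta>: "0 \<le> \<delta>" using r t unfolding \<delta>_def by simp
  have y0: "\<forall>S. 0 \<le> yv s S" and supp: "\<forall>S. yv s S \<noteq> 0 \<longrightarrow> S \<subseteq> \<Union>(act s)"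
    and vl: "\<forall>w\<in>\<Union>(act s). vertex_load V (yv s) w \<le> r * (clock s - atime w)"
    and pairs: "\<forall>u\<in>\<Union>(act s). \<forall>w\<in>\<Union>(act s). u \<noteq> w \<longrightarrow> load V (yv s) u w \<le> bound u w"
    using D unfolding gd_dual_inv_def by auto
  have dis: "pairwise disjnt (act s)" using P unfolding gd_partition_inv_def by auto
  have vertex: "vertex_load V (grow r s t) w \<le> r * (t - atime w)" if w: "w \<in> \<Union>(act s)" for w
  proof -
    let ?Q = "{S\<in>Pow V. w \<in> S}"
    obtain T where T: "T \<in> act s" "w \<in> T" using w by blast
    have "{S\<in>?Q. growing S} \<subseteq> {T}"
      using T dis unfolding growing_def pairwise_def disjnt_def by blast
    then have one: "card {S\<in>?Q. growing S} \<le> 1"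
      using card_mono[of "{T}"] by fastforce
    have "vertex_load V (grow r s t) w = vertex_load V (yv s) w + real (card {S\<in>?Q. growing S}) * \<delta>"
      unfolding vertex_load_def grow sum.distrib
      using sum.inter_filter[of ?Q "\<lambda>_. \<delta>" growing] fV by simp
    also have "\<dots> \<le> r * (clock s - atime w) + 1 * \<delta>"
      using vl w one \<delta> by (intro add_mono mult_right_mono) auto
    also have "\<dots> = r * (t - atime w)" unfolding \<delta>_def by (simp add: algebra_simps)
    finally show ?thesis .
  qed
  have same: "load V (grow r s t) u w = load V (yv s) u w" if uw: "same_active (act s) u w" for u w
  proof -
    obtain T where T: "T \<in> act s" "u \<in> T" "w \<in> T" using uw unfolding same_active_def by blast
    have "\<not> growing S" if "crosses S u w" for S
      using T dis that unfolding growing_def crosses_def pairwise_def disjnt_def by blast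
    then show ?thesis unfolding load_def grow by (auto intro: sum.cong)
  qed
  have "load V (grow r s t) u w \<le> bound u w"
    if "u \<in> \<Union>(act s)" "w \<in> \<Union>(act s)" "u \<noteq> w" for u w
    using that pairs cross same by (cases "same_active (act s) u w") auto
  moreover have "\<forall>S. 0 \<le> grow r s t S" using y0 \<delta> grow by simp
  moreover have "\<forall>S. grow r s t S \<noteq> 0 \<longrightarrow> S \<subseteq> \<Union>(act s)"
    using supp grow unfolding growing_def by auto
  ultimately show ?thesis unfolding gd_dual_inv_def using vertex by simp
qed

lemma card_free_Union_act:
  assumes fV: "finite V" and P: "gd_partition_inv k V s"
  shows "card (free (grp s) (\<Union>(act s))) = (\<Sum>S\<in>act s. sur k S)"
proof -
  have sub: "\<forall>S\<in>act s. S \<subseteq> V" and dis: "pairwise disjnt (act s)"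
    and card_free: "\<forall>S\<in>act s. card (free (grp s) S) = sur k S"
    using P unfolding gd_partition_inv_def by auto
  have fin: "finite (act s)" "\<forall>S\<in>act s. finite (free (grp s) S)"
    using sub fV by (auto simp: free_def intro: finite_subset[of _ "Pow V"] finite_subset)
  have "free (grp s) (\<Union>(act s)) = (\<Union>S\<in>act s. free (grp s) S)"
    unfolding free_def by blast
  also have "card \<dots> = (\<Sum>S\<in>act s. card (free (grp s) S))"
    by (rule card_UN_disjoint[OF fin]) (use dis in \<open>auto simp: pairwise_def disjnt_def free_def\<close>)
  finally have "card (free (grp s) (\<Union>(act s))) = (\<Sum>S\<in>act s. card (free (grp s) S))" .
  then show ?thesis using card_free by simp
qed

lemma sum_sur_grow:
  assumes fV: "finite V" and P: "gd_partition_inv k V s"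
  shows "(\<Sum>S\<in>Pow V. real (sur k S) * grow r s t S)
           = (\<Sum>S\<in>Pow V. real (sur k S) * yv s S)
             + r * (t - clock s) * card (free (grp s) (\<Union>(act s)))"
proof -
  let ?growth = "\<lambda>S. if S \<in> act s \<and> free (grp s) S \<noteq> {} then r * (t - clock s) else 0"
  have sub: "act s \<subseteq> Pow V" and card_free: "\<forall>S\<in>act s. card (free (grp s) S) = sur k S"
    using P unfolding gd_partition_inv_def by auto
  have "(\<Sum>S\<in>Pow V. real (sur k S) * grow r s t S)
          = (\<Sum>S\<in>Pow V. real (sur k S) * yv s S) + (\<Sum>S\<in>Pow V. real (sur k S) * ?growth S)"
    unfolding grow_def by (simp add: distrib_left sum.distrib)
  also have "(\<Sum>S\<in>Pow V. real (sur k S) * ?growth S) = (\<Sum>S\<in>act s. real (sur k S) * ?growth S)"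
    by (rule sum.mono_neutral_right) (use fV sub in auto)
  also have "\<dots> = (\<Sum>S\<in>act s. real (sur k S) * (r * (t - clock s)))"
    using card_free by (intro sum.cong) auto
  also have "\<dots> = r * (t - clock s) * card (free (grp s) (\<Union>(act s)))"
    unfolding card_free_Union_act[OF fV P] by (metis (no_types) mult.commute of_nat_sum sum_distrib_right)
  finally show ?thesis .
qed

definition gd_accounting :: "nat \<Rightarrow> real \<Rightarrow> 'v set \<Rightarrow> ('v \<Rightarrow> real) \<Rightarrow> 'v gd_state \<Rightarrow> bool" where
  "gd_accounting k r V atime s \<longleftrightarrow>
     r * (waiting_cost atime (grp s) + (\<Sum>v\<in>free (grp s) (\<Union>(act s)). clock s - atime v))
       = (\<Sum>S\<in>Pow V. real (sur k S) * yv s S)"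

lemma gd_accounting_arrive:
  assumes fV: "finite V" and P: "gd_partition_inv k V s" and A: "gd_accounting k r V atime s"
    and v: "v \<notin> \<Union>(act s)" "atime v = clock s"
  shows "gd_accounting k r V atime (s\<lparr>act := insert {v} (act s)\<rparr>)"
proof -
  have UV: "\<Union>(act s) \<subseteq> V" and matched: "\<Union>(fst ` grp s) \<subseteq> \<Union>(act s)"
    using P unfolding gd_partition_inv_def by auto
  have "free (grp s) (\<Union>(insert {v} (act s))) = insert v (free (grp s) (\<Union>(act s)))"
    using matched v(1) unfolding free_def by blast
  moreover have "finite (free (grp s) (\<Union>(act s)))" "v \<notin> free (grp s) (\<Union>(act s))"
    using UV fV v(1) unfolding free_def by (auto intro: finite_subset)
  ultimately show ?thesis using A v(2) unfolding gd_accounting_def by simp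
qed

lemma gd_accounting_merge:
  assumes fV: "finite V" and P: "gd_partition_inv k V s" and A: "gd_accounting k r V atime s"
    and S12: "S1 \<in> act s" "S2 \<in> act s"
    and NG: "\<forall>g\<in>NG. g \<subseteq> free (grp s) (S1 \<union> S2) \<and> card g = k" "pairwise disjnt NG"
    and k: "k > 0"
  shows "gd_accounting k r V atime (s\<lparr>act := insert (S1 \<union> S2) (act s - {S1, S2}),
              grp := grp s \<union> (\<lambda>g. (g, clock s)) ` NG\<rparr>)"
    (is "gd_accounting k r V atime ?s'")
proof -
  let ?U = "\<Union>(act s)" and ?F = "free (grp s)" and ?wait = "\<lambda>v. clock s - atime v"
  have UV: "?U \<subseteq> V" and finG: "finite (grp s)"
    using P unfolding gd_partition_inv_def by auto
  have free': "free (grp ?s') (\<Union>(act ?s')) = ?F ?U - \<Union>NG"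
    using S12 by (auto simp: free_Un_groups free_def)
  have finF: "finite (?F ?U)" using UV fV unfolding free_def by (auto intro: finite_subset)
  have NG_sub: "\<Union>NG \<subseteq> ?F ?U" using NG(1) S12 unfolding free_def by blast
  have finNG: "finite NG" "\<forall>g\<in>NG. finite g"
    using NG_sub finF by (auto intro: finite_subset[of _ "Pow (?F ?U)"] finite_subset)
  have new: "\<forall>g\<in>NG. (g, clock s) \<notin> grp s"
  proof (intro ballI notI)
    fix g assume g: "g \<in> NG" "(g, clock s) \<in> grp s"
    then have "g \<noteq> {}" "g \<subseteq> ?F (S1 \<union> S2)" using NG(1) k by auto
    moreover have "g \<subseteq> \<Union>(fst ` grp s)" using g(2) by force
    ultimately show False unfolding free_def by blast
  qed
  have "(\<Sum>v\<in>?F ?U. ?wait v) = (\<Sum>v\<in>?F ?U - \<Union>NG. ?wait v) + (\<Sum>v\<in>\<Union>NG. ?wait v)"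
    using sum.subset_diff[OF NG_sub finF] by simp
  moreover have "waiting_cost atime (grp ?s') = waiting_cost atime (grp s) + (\<Sum>v\<in>\<Union>NG. ?wait v)"
    using waiting_cost_add_groups[OF finG finNG NG(2) new] by simp
  ultimately show ?thesis
    using A unfolding gd_accounting_def free' by (simp add: algebra_simps)
qed

lemma gd_accounting_advance:
  assumes fV: "finite V" and P: "gd_partition_inv k V s" and A: "gd_accounting k r V atime s"
  shows "gd_accounting k r V atime (s\<lparr>clock := t, yv := grow r s t\<rparr>)"
proof -
  let ?F = "free (grp s) (\<Union>(act s))"
  have "(\<Sum>v\<in>?F. t - atime v) = (\<Sum>v\<in>?F. (clock s - atime v) + (t - clock s))"
    by simp
  also have "\<dots> = (\<Sum>v\<in>?F. clock s - atime v) + card ?F * (t - clock s)"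
    by (simp only: sum.distrib sum_constant)
  finally have shift: "(\<Sum>v\<in>?F. t - atime v) = (\<Sum>v\<in>?F. clock s - atime v) + card ?F * (t - clock s)" .
  have "r * (waiting_cost atime (grp s) + (\<Sum>v\<in>?F. t - atime v))
      = r * (waiting_cost atime (grp s) + (\<Sum>v\<in>?F. clock s - atime v)) + r * (t - clock s) * card ?F"
    unfolding shift by (simp add: algebra_simps)
  also have "\<dots> = (\<Sum>S\<in>Pow V. real (sur k S) * yv s S) + r * (t - clock s) * card ?F"
    using A unfolding gd_accounting_def by simp
  also have "\<dots> = (\<Sum>S\<in>Pow V. real (sur k S) * grow r s t S)"
    using sum_sur_grow[OF fV P] by simp
  finally show ?thesis unfolding gd_accounting_def by simp
qed

lemma gd_reachable_invariants:
  assumes fV: "finite V" and r: "0 \<le> r" and k: "k \<ge> 2"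
    and B: "\<forall>u\<in>V. \<forall>w\<in>V. r * \<bar>atime u - atime w\<bar> \<le> bound u w"
    and run: "(gd_step k r V atime bound)\<^sup>*\<^sup>* gd_init s"
  shows "gd_partition_inv k V s \<and> gd_dual_inv r V atime bound s \<and> gd_accounting k r V atime s"
  using run
proof (induction rule: rtranclp_induct)
  case base
  show ?case unfolding gd_partition_inv_def gd_dual_inv_def gd_accounting_def gd_init_def
    by (simp add: waiting_cost_def free_def)
next
  case (step s s')
  then have P: "gd_partition_inv k V s" and D: "gd_dual_inv r V atime bound s"
    and A: "gd_accounting k r V atime s" by auto
  have "gd_partition_inv k V s'" by (rule gd_step_partition_inv[OF fV k step(2) P])
  moreover from step(2) have "gd_dual_inv r V atime bound s' \<and> gd_accounting k r V atime s'"
  proof cases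
    case (arrive v)
    then show ?thesis
      using gd_dual_inv_arrive[OF fV r B P D] gd_accounting_arrive[OF fV P A] by simp
  next
    case (merge S1 S2 u w NG)
    have "\<Union>(insert (S1 \<union> S2) (act s - {S1, S2})) = \<Union>(act s)" using merge by blast
    then have "gd_dual_inv r V atime bound s'" using D merge(1) unfolding gd_dual_inv_def by simp
    moreover have "gd_accounting k r V atime s'"
      unfolding merge(1) by (rule gd_accounting_merge[OF fV P A]) (use merge k in auto)
    ultimately show ?thesis ..
  next
    case (advance t)
    then show ?thesis
      using gd_dual_inv_advance[OF fV r _ P D] gd_accounting_advance[OF fV P A] by simp
  qed
  ultimately show ?case by blast
qed

lemma gd_completed_run:
  assumes fV: "finite V" and r: "0 \<le> r" and k: "k \<ge> 2"
    and B: "\<forall>u\<in>V. \<forall>w\<in>V. r * \<bar>atime u - atime w\<bar> \<le> bound u w"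
    and run: "(gd_step k r V atime bound)\<^sup>*\<^sup>* gd_init s"
    and all_matched: "\<Union>(fst ` grp s) = V"
  shows "r * waiting_cost atime (grp s) = (\<Sum>S\<in>Pow V. real (sur k S) * yv s S)"
    and "D'_feasible V bound (yv s)"
proof -
  have P: "gd_partition_inv k V s" and D: "gd_dual_inv r V atime bound s"
    and A: "gd_accounting k r V atime s"
    using gd_reachable_invariants[OF fV r k B run] by auto
  have U: "\<Union>(act s) = V" using P all_matched unfolding gd_partition_inv_def by auto
  have "free (grp s) (\<Union>(act s)) = {}" unfolding free_def U all_matched by simp
  then show "r * waiting_cost atime (grp s) = (\<Sum>S\<in>Pow V. real (sur k S) * yv s S)"
    using A unfolding gd_accounting_def by simp
  show "D'_feasible V bound (yv s)" using D U unfolding gd_dual_inv_def D'_feasible_def by auto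
qed

theorem lemma5:
  fixes k \<gamma> m :: nat
    and dH :: "'p list \<Rightarrow> real"
    and atime :: "nat \<Rightarrow> real"
    and pos :: "nat \<Rightarrow> 'p"
    and s :: "nat gd_state"
  assumes k2: "k \<ge> 2"
    and \<gamma>1: "1 \<le> \<gamma>" and \<gamma>k: "\<gamma> \<le> k - 1"
    and H: "is_Hmetric k \<gamma> dH"
    and mk: "k dvd m"
    and at_nonneg: "\<forall>v<m. atime v \<ge> 0"
    and at_mono: "mono_on {..<m} atime"
    and run: "(gd_step k (1 / (real \<gamma> * real k ^ 2)) {..<m} atime
                 (\<lambda>u w. opt_cost k dH atime pos u w / (real \<gamma> * real k ^ 2)))\<^sup>*\<^sup>* gd_init s"
    and all_matched: "\<Union>(fst ` grp s) = {..<m}"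
  shows "waiting_cost atime (grp s)
           = (1 / (1 / (real \<gamma> * real k ^ 2))) * (\<Sum>S\<in>Pow {..<m}. real (sur k S) * yv s S)
       \<and> (1 / (1 / (real \<gamma> * real k ^ 2))) * (\<Sum>S\<in>Pow {..<m}. real (sur k S) * yv s S)
           \<le> (1 / (1 / (real \<gamma> * real k ^ 2))) * D'_opt k \<gamma> dH {..<m} atime pos"
proof -
  define c where "c = real \<gamma> * real k ^ 2"
  define bound where "bound u w = opt_cost k dH atime pos u w / c" for u w
  have c: "0 < c" unfolding c_def using \<gamma>1 k2 by simp
  have B: "\<forall>u\<in>{..<m}. \<forall>w\<in>{..<m}. 1 / c * \<bar>atime u - atime w\<bar> \<le> bound u w"
    using opt_cost_ge_arrival_gap[OF H] k2 less_imp_le[OF c]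
    unfolding bound_def by (auto intro!: divide_right_mono)
  have run': "(gd_step k (1 / c) {..<m} atime bound)\<^sup>*\<^sup>* gd_init s"
    using run unfolding c_def bound_def .
  note completed = gd_completed_run[OF _ _ k2 B run' all_matched]
  have wait: "waiting_cost atime (grp s) = c * (\<Sum>S\<in>Pow {..<m}. real (sur k S) * yv s S)"
    using completed(1) c by (simp add: field_simps)
  have feasible: "D'_feasible {..<m} bound (yv s)"
    using completed(2) c by simp
  have "(\<Sum>S\<in>Pow {..<m}. real (sur k S) * yv s S) \<le> D'_obj k {..<m} (yv s)"
    using feasible k2 unfolding D'_feasible_def by (intro sum_sur_le_D'_obj) auto
  also have "\<dots> \<le> Sup {D'_obj k {..<m} y | y. D'_feasible {..<m} bound y}"
    using feasible bdd_above_D'_obj[of "{..<m}" k bound] k2 mk by (intro cSup_upper) auto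
  also have "\<dots> = D'_opt k \<gamma> dH {..<m} atime pos"
    unfolding D'_opt_def bound_def c_def ..
  finally show ?thesis
    unfolding c_def[symmetric] using wait c by (simp add: mult_left_mono)
qed

end
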